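(* Let $\sigma:[0,\infty)\to[0,\infty)$ be nondecreasing with $\lim_{t\to\infty}\sigma(t)=\infty$, admitting $\varrho$ as a proximate order with $\lim_{t\to\infty}\varrho(t)=\rho$. Then $\beta(\sigma)=\mu(\sigma)=\rho(\sigma)=\alpha(\sigma)=\rho$. Consequently, if $\sigma$ admits a nonzero proximate order, then $\sigma$ satisfies $(\omega_1)$ and $(\omega_6)$.
   Context: A proximate order is a function $\varrho:(c,\infty)\to[0,\infty)$, $c\ge0$, which is continuous and piecewise continuously differentiable, with $\lim_{t\to\infty}\varrho(t)=\rho<\infty$ and $\lim_{t\to\infty}t\varrho'(t)\log t=0$; it is nonzero if $\rho>0$. $\sigma$ admits $\varrho$ as a proximate order if there are $A,B>0$ with $A\le\sigma(t)/t^{\varrho(t)}\le B$ for all $t$ large enough. For a positive measurable $f$ on $[A,\infty)$: $\alpha(f):=\inf\{\alpha:\exists C_\alpha>0\ \forall\Lambda>1,\ \limsup_{x\to\infty}\sup_{\lambda\in[1,\Lambda]}\frac{f(\lambda x)}{\lambda^{\alpha}f(x)}\le C_\alpha\}$, $\beta(f):=\sup\{\beta:\exists D_\beta>0\ \forall\Lambda>1,\ \liminf_{x\to\infty}\inf_{\lambda\in[1,\Lambda]}\frac{f(\lambda x)}{\lambda^{\beta}f(x)}\ge D_\beta\}$, $\mu(f):=\liminf_{x\to\infty}\frac{\log f(x)}{\log x}$, $\rho(f):=\limsup_{x\to\infty}\frac{\log f(x)}{\log x}$; for $\sigma$ these are computed on any $[A,\infty)$, $A>0$, where $\sigma>0$.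 Condition $(\omega_1)$: $\sigma(2t)=O(\sigma(t))$ as $t\to\infty$. Condition $(\omega_6)$: there is $H\ge1$ with $2\sigma(t)\le\sigma(Ht)+H$ for all $t\ge0$. *)

theory Defs
  imports "HOL-Analysis.Analysis" "HOL-Library.Landau_Symbols"
begin

definition proximate_order :: "(real \<Rightarrow> real) \<Rightarrow> real \<Rightarrow> bool" where
  "proximate_order \<rho> \<rho>0 \<longleftrightarrow>
     (\<exists>c\<ge>0.
        (\<forall>t>c. \<rho> t \<ge> 0) \<and>
        continuous_on {c<..} \<rho> \<and>
        (\<forall>a b. c < a \<longrightarrow> \<rho> piecewise_C1_differentiable_on {a..b}) \<and>
        (\<rho> \<longlongrightarrow> \<rho>0) at_top \<and>
        (\<forall>\<epsilon>>0. \<exists>T. \<forall>t>T. \<rho> differentiable (at t) \<longrightarrow>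
            \<bar>t * deriv \<rho> t * ln t\<bar> < \<epsilon>))"

definition admits_proximate_order :: "(real \<Rightarrow> real) \<Rightarrow> (real \<Rightarrow> real) \<Rightarrow> bool" where
  "admits_proximate_order \<sigma> \<rho> \<longleftrightarrow>
     (\<exists>A>0. \<exists>B>0. eventually (\<lambda>t. A \<le> \<sigma> t / t powr \<rho> t \<and> \<sigma> t / t powr \<rho> t \<le> B) at_top)"

definition index_alpha :: "(real \<Rightarrow> real) \<Rightarrow> ereal" where
  "index_alpha f = (INF a \<in> {a::real. \<exists>C>0. \<forall>\<Lambda>>1.
      Limsup at_top (\<lambda>x. SUP l\<in>{1..\<Lambda>}. ereal (f (l * x) / (l powr a * f x))) \<le> ereal C}. ereal a)"

definition index_beta :: "(real \<Rightarrow> real) \<Rightarrow> ereal" where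
  "index_beta f = (SUP b \<in> {b::real. \<exists>D>0. \<forall>\<Lambda>>1.
      Liminf at_top (\<lambda>x. INF l\<in>{1..\<Lambda>}. ereal (f (l * x) / (l powr b * f x))) \<ge> ereal D}. ereal b)"

definition index_mu :: "(real \<Rightarrow> real) \<Rightarrow> ereal" where
  "index_mu f = Liminf at_top (\<lambda>x. ereal (ln (f x) / ln x))"

definition index_rho :: "(real \<Rightarrow> real) \<Rightarrow> ereal" where
  "index_rho f = Limsup at_top (\<lambda>x. ereal (ln (f x) / ln x))"

definition omega1 :: "(real \<Rightarrow> real) \<Rightarrow> bool" where
  "omega1 \<sigma> \<longleftrightarrow> (\<lambda>t. \<sigma> (2 * t)) \<in> O(\<sigma>)"

definition omega6 :: "(real \<Rightarrow> real) \<Rightarrow> bool" where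
  "omega6 \<sigma> \<longleftrightarrow> (\<exists>H\<ge>1. \<forall>t\<ge>0. 2 * \<sigma> t \<le> \<sigma> (H * t) + H)"

end

theory Submission
  imports Defs
begin

(* If t rho'(t) log t -> 0, the mean value inequality gives |rho(y) - rho(x)| log x <= eps log(y/x)
   for large x <= y, so log of t^(rho(t) - rho0) varies by o(1) on [x, Lambda x]: t^rho(t) is
   regularly varying with index rho0.  As sigma is comparable to t^rho(t), this yields
   sigma(l x) ~ l^rho0 sigma(x) up to a constant independent of l >= 1, which forces
   alpha(sigma) = beta(sigma) = rho0, and log sigma(x) = rho(x) log x + O(1), which forces
   mu(sigma) = rho(sigma) = rho0.  For rho0 > 0 the same comparison with l = 2 gives (omega_1),
   and with l = H, H^rho0 large, gives 2 sigma(t) <= sigma(H t) for large t, whence (omega_6). *)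

lemma le_if_has_real_derivative_nonneg_except_finite:
  fixes g g' :: "real \<Rightarrow> real"
  assumes "finite S" "a \<le> b" "continuous_on {a..b} g"
    and "\<And>x. x \<in> {a<..<b} - S \<Longrightarrow> (g has_real_derivative g' x) (at x)"
    and "\<And>x. x \<in> {a<..<b} - S \<Longrightarrow> g' x \<ge> 0"
  shows "g a \<le> g b"
proof -
  let ?h = "\<lambda>x. if x \<in> {a<..<b} - S then g' x else 0"
  have "(?h has_integral (g b - g a)) {a..b}"
    by (rule fundamental_theorem_of_calculus_interior_strong[OF assms(1,2) _ assms(3)])
       (use assms(4) in \<open>auto simp: has_real_derivative_iff_has_vector_derivative[symmetric]\<close>)
  then have "0 \<le> g b - g a"
    by (rule has_integral_nonneg) (use assms(5) in auto)
  then show ?thesis by simp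
qed

lemma abs_diff_le_if_has_real_derivative_dominated_except_finite:
  fixes f G f' G' :: "real \<Rightarrow> real"
  assumes "finite S" "a \<le> b" "continuous_on {a..b} f" "continuous_on {a..b} G"
    and "\<And>x. x \<in> {a<..<b} - S \<Longrightarrow> (f has_real_derivative f' x) (at x)"
    and "\<And>x. x \<in> {a<..<b} - S \<Longrightarrow> (G has_real_derivative G' x) (at x)"
    and "\<And>x. x \<in> {a<..<b} - S \<Longrightarrow> \<bar>f' x\<bar> \<le> G' x"
  shows "\<bar>f b - f a\<bar> \<le> G b - G a"
proof -
  have "(\<lambda>x. G x + s * f x) a \<le> (\<lambda>x. G x + s * f x) b" if "s \<in> {-1, 1}" for s
  proof (rule le_if_has_real_derivative_nonneg_except_finite[OF assms(1,2)])
    show "continuous_on {a..b} (\<lambda>x. G x + s * f x)"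
      using assms(3,4) by (intro continuous_intros)
    fix x assume x: "x \<in> {a<..<b} - S"
    show "((\<lambda>x. G x + s * f x) has_real_derivative G' x + s * f' x) (at x)"
      using assms(5,6)[OF x] by (auto intro!: derivative_eq_intros)
    show "0 \<le> G' x + s * f' x"
      using assms(7)[OF x] that by auto
  qed
  from this[of 1] this[of "-1"] show ?thesis by (simp add: abs_le_iff)
qed

lemma le_exp_mult_if_ln_diff_le:
  fixes u v c :: real
  assumes "u > 0" "v > 0" "ln u - ln v \<le> c"
  shows "u \<le> exp c * v"
proof -
  have "u = exp (ln u)" using assms(1) by simp
  also have "\<dots> \<le> exp (c + ln v)" using assms(3) by simp
  also have "\<dots> = exp c * v" using assms(2) by (simp add: exp_add)
  finally show ?thesis .
qed

lemma ex_gt_one_powr_gt: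
  fixes d M :: real
  assumes "d > 0"
  shows "\<exists>\<Lambda>>1. \<Lambda> powr d > M"
proof (intro exI conjI)
  show "exp ((\<bar>M\<bar> + 1) / d) > 1" using assms by simp
  have "exp ((\<bar>M\<bar> + 1) / d) powr d = exp (\<bar>M\<bar> + 1)"
    using assms by (simp add: powr_def)
  also have "\<dots> > M" by (smt (verit) exp_ge_add_one_self)
  finally show "exp ((\<bar>M\<bar> + 1) / d) powr d > M" .
qed

lemma proximate_order_increment_bound:
  assumes "proximate_order \<rho> \<rho>0" and "\<epsilon> > 0"
  obtains X where "X > 1"
    and "\<And>x y. X \<le> x \<Longrightarrow> x \<le> y \<Longrightarrow> \<bar>\<rho> y - \<rho> x\<bar> * ln x \<le> \<epsilon> * (ln y - ln x)"
proof -
  obtain c where cont: "continuous_on {c<..} \<rho>"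
    and pw: "\<And>a b. c < a \<Longrightarrow> \<rho> piecewise_C1_differentiable_on {a..b}"
    and dv: "\<And>\<epsilon>. \<epsilon> > 0 \<Longrightarrow> \<exists>T. \<forall>t>T. \<rho> differentiable (at t) \<longrightarrow> \<bar>t * deriv \<rho> t * ln t\<bar> < \<epsilon>"
    using assms(1) unfolding proximate_order_def by blast
  obtain T where T: "\<And>t. t > T \<Longrightarrow> \<rho> differentiable (at t) \<Longrightarrow> \<bar>t * deriv \<rho> t * ln t\<bar> < \<epsilon>"
    using dv[OF assms(2)] by blast
  define X where "X = max (c + 1) (max (T + 1) 2)"
  have "\<bar>\<rho> y - \<rho> x\<bar> * ln x \<le> \<epsilon> * (ln y - ln x)" if "X \<le> x" "x \<le> y" for x y
  proof -
    have x: "x > 1" "x > c" "x > T" using that unfolding X_def by auto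
    obtain K D where K: "finite K"
      and D: "\<And>s. s \<in> {x..y} - K \<Longrightarrow> (\<rho> has_real_derivative D s) (at s)"
      using pw[OF x(2), of y]
      unfolding piecewise_C1_differentiable_on_def C1_differentiable_on_def
        has_real_derivative_iff_has_vector_derivative by blast
    have "\<bar>D s * ln x\<bar> \<le> \<epsilon> / s" if s: "s \<in> {x<..<y} - K" for s
    proof -
      have s_pos: "s > 0" and ln_s: "ln x \<le> ln s" using s x by auto
      have "deriv \<rho> s = D s" using D s by (auto intro: DERIV_imp_deriv)
      then have "\<bar>s * D s * ln s\<bar> < \<epsilon>"
        using T[of s] D[of s] s x by (auto simp: real_differentiable_def)
      then have "\<bar>D s\<bar> * ln s \<le> \<epsilon> / s"
        using s_pos x ln_s by (simp add: abs_mult field_simps)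
      moreover have "\<bar>D s * ln x\<bar> \<le> \<bar>D s\<bar> * ln s"
        using x ln_s by (simp add: abs_mult mult_left_mono)
      ultimately show ?thesis by linarith
    qed
    then have "\<bar>\<rho> y * ln x - \<rho> x * ln x\<bar> \<le> \<epsilon> * ln y - \<epsilon> * ln x"
      using K that(2) x
      by (intro abs_diff_le_if_has_real_derivative_dominated_except_finite
            [of K _ _ _ _ "\<lambda>s. D s * ln x" "\<lambda>s. \<epsilon> / s"])
         (auto intro!: continuous_intros derivative_eq_intros D
           intro: continuous_on_subset[OF cont])
    then show ?thesis using x by (simp add: abs_mult left_diff_distrib[symmetric] right_diff_distrib)
  qed
  moreover have "X > 1" unfolding X_def by simp
  ultimately show thesis using that by blast
qed

text \<open>Slow variation of \<open>t powr (\<rho> t - \<rho>0)\<close>, in logarithmic form.\<close>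
lemma proximate_order_slowly_varying:
  assumes po: "proximate_order \<rho> \<rho>0" and "\<Lambda> \<ge> 1" and "\<delta> > 0"
  shows "eventually (\<lambda>x. \<forall>l\<in>{1..\<Lambda>}.
           \<bar>\<rho> (l * x) * ln (l * x) - \<rho> x * ln x - \<rho>0 * ln l\<bar> \<le> \<delta>) at_top"
proof -
  define \<epsilon> where "\<epsilon> = \<delta> / (2 * (ln \<Lambda> + 1))"
  have "ln \<Lambda> \<ge> 0" using \<open>\<Lambda> \<ge> 1\<close> by simp
  then have \<epsilon>: "\<epsilon> > 0" "\<epsilon> * ln \<Lambda> \<le> \<delta> / 2"
    using \<open>\<delta> > 0\<close> unfolding \<epsilon>_def by (auto simp: field_simps)
  obtain X where "X > 1"
    and X: "\<And>x y. X \<le> x \<Longrightarrow> x \<le> y \<Longrightarrow> \<bar>\<rho> y - \<rho> x\<bar> * ln x \<le> \<epsilon> * (ln y - ln x)"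
    using proximate_order_increment_bound[OF po \<epsilon>(1)] by blast
  have "(\<rho> \<longlongrightarrow> \<rho>0) at_top" using po unfolding proximate_order_def by blast
  then have "eventually (\<lambda>t. \<bar>\<rho> t - \<rho>0\<bar> < \<epsilon>) at_top"
    using \<epsilon>(1) by (auto dest: tendstoD simp: dist_real_def)
  then obtain X' where X': "\<And>t. t \<ge> X' \<Longrightarrow> \<bar>\<rho> t - \<rho>0\<bar> < \<epsilon>"
    unfolding eventually_at_top_linorder by blast
  show ?thesis unfolding eventually_at_top_linorder
  proof (intro exI[of _ "max X X'"] allI impI ballI)
    fix x l assume x: "max X X' \<le> x" and l: "l \<in> {1..\<Lambda>}"
    have lx: "x \<le> l * x" and ln_l: "0 \<le> ln l" "ln l \<le> ln \<Lambda>" and ln_lx: "ln (l * x) = ln l + ln x"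
      using x l \<open>X > 1\<close> by (auto simp: ln_mult)
    have "\<bar>(\<rho> (l * x) - \<rho>0) * ln l\<bar> \<le> \<epsilon> * ln \<Lambda>"
      using X'[of "l * x"] x lx ln_l \<epsilon>(1)
      by (simp add: abs_mult) (meson less_imp_le mult_mono order.trans)
    moreover have "\<bar>(\<rho> (l * x) - \<rho> x) * ln x\<bar> \<le> \<epsilon> * ln \<Lambda>"
      using X[of x "l * x"] x lx ln_l \<epsilon>(1) \<open>X > 1\<close> ln_lx
      by (simp add: abs_mult) (smt (verit) mult_left_mono)
    moreover have "\<rho> (l * x) * ln (l * x) - \<rho> x * ln x - \<rho>0 * ln l
        = (\<rho> (l * x) - \<rho>0) * ln l + (\<rho> (l * x) - \<rho> x) * ln x"
      unfolding ln_lx by (simp add: algebra_simps)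
    ultimately show "\<bar>\<rho> (l * x) * ln (l * x) - \<rho> x * ln x - \<rho>0 * ln l\<bar> \<le> \<delta>"
      using \<epsilon>(2) by linarith
  qed
qed

lemma admits_proximate_order_ln_bound:
  assumes "admits_proximate_order \<sigma> \<rho>"
  obtains M where "eventually (\<lambda>t. \<sigma> t > 0 \<and> \<bar>ln (\<sigma> t) - \<rho> t * ln t\<bar> \<le> M) at_top"
proof -
  obtain A B where "A > 0"
    and AB: "eventually (\<lambda>t. A \<le> \<sigma> t / t powr \<rho> t \<and> \<sigma> t / t powr \<rho> t \<le> B) at_top"
    using assms unfolding admits_proximate_order_def by blast
  have "eventually (\<lambda>t. \<sigma> t > 0 \<and> \<bar>ln (\<sigma> t) - \<rho> t * ln t\<bar> \<le> \<bar>ln A\<bar> + \<bar>ln B\<bar>) at_top"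
    using AB eventually_gt_at_top[of 0]
  proof eventually_elim
    case (elim t)
    define q where "q = \<sigma> t / t powr \<rho> t"
    have "q > 0" "ln A \<le> ln q" "ln q \<le> ln B"
      using elim \<open>A > 0\<close> unfolding q_def by auto
    moreover have "\<sigma> t > 0"
      using elim \<open>q > 0\<close> unfolding q_def by (simp add: zero_less_divide_iff)
    moreover from this have "ln (\<sigma> t) - \<rho> t * ln t = ln q"
      using elim unfolding q_def by (simp add: ln_div ln_powr)
    ultimately show ?case by linarith
  qed
  then show thesis by (rule that)
qed

lemma ln_div_ln_tendsto_if_admits_proximate_order:
  assumes "proximate_order \<rho> \<rho>0" and "admits_proximate_order \<sigma> \<rho>"
  shows "((\<lambda>x. ln (\<sigma> x) / ln x) \<longlongrightarrow> \<rho>0) at_top"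
proof -
  obtain M where M: "eventually (\<lambda>t. \<sigma> t > 0 \<and> \<bar>ln (\<sigma> t) - \<rho> t * ln t\<bar> \<le> M) at_top"
    using admits_proximate_order_ln_bound[OF assms(2)] by blast
  define g where "g x = (ln (\<sigma> x) - \<rho> x * ln x) / ln x" for x
  have "eventually (\<lambda>x. norm (g x) \<le> M / ln x) at_top"
    using M eventually_gt_at_top[of 1]
    by eventually_elim (simp add: g_def abs_divide divide_right_mono)
  moreover have "filterlim (ln :: real \<Rightarrow> real) at_infinity at_top"
    by (rule filterlim_at_top_imp_at_infinity[OF ln_at_top])
  then have "((\<lambda>x. M / ln x) \<longlongrightarrow> 0) at_top"
    by (rule tendsto_divide_0[OF tendsto_const])
  ultimately have "(g \<longlongrightarrow> 0) at_top"
    by (rule Lim_null_comparison)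
  moreover have "(\<rho> \<longlongrightarrow> \<rho>0) at_top"
    using assms(1) unfolding proximate_order_def by blast
  ultimately have "((\<lambda>x. g x + \<rho> x) \<longlongrightarrow> \<rho>0) at_top"
    using tendsto_add by fastforce
  moreover have "eventually (\<lambda>x. g x + \<rho> x = ln (\<sigma> x) / ln x) at_top"
    using eventually_gt_at_top[of 1] by eventually_elim (simp add: g_def field_simps)
  ultimately show ?thesis by (rule Lim_transform_eventually)
qed

lemma index_mu_index_rho_eq_if_tendsto:
  assumes "((\<lambda>x. ln (f x) / ln x) \<longlongrightarrow> r) at_top"
  shows "index_mu f = ereal r" "index_rho f = ereal r"
proof -
  have "((\<lambda>x. ereal (ln (f x) / ln x)) \<longlongrightarrow> ereal r) at_top"
    using assms by (rule tendsto_ereal)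
  then show "index_mu f = ereal r" "index_rho f = ereal r"
    unfolding index_mu_def index_rho_def by (simp_all add: lim_imp_Liminf lim_imp_Limsup)
qed

text \<open>The constant \<open>K\<close> does not depend on \<open>\<Lambda>\<close>; this is what pins both indices
  \<open>\<alpha>\<close> and \<open>\<beta>\<close> to \<open>r\<close>.\<close>
definition uniform_powr_scaling :: "(real \<Rightarrow> real) \<Rightarrow> real \<Rightarrow> bool" where
  "uniform_powr_scaling f r \<longleftrightarrow> (\<exists>K>0. \<forall>\<Lambda>\<ge>1. eventually (\<lambda>x. f x > 0 \<and>
     (\<forall>l\<in>{1..\<Lambda>}. l powr r * f x \<le> K * f (l * x) \<and> f (l * x) \<le> K * (l powr r * f x))) at_top)"

lemma uniform_powr_scaling_if_admits_proximate_order: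
  assumes po: "proximate_order \<rho> \<rho>0" and "admits_proximate_order \<sigma> \<rho>"
  shows "uniform_powr_scaling \<sigma> \<rho>0"
proof -
  obtain M where "eventually (\<lambda>t. \<sigma> t > 0 \<and> \<bar>ln (\<sigma> t) - \<rho> t * ln t\<bar> \<le> M) at_top"
    using admits_proximate_order_ln_bound[OF assms(2)] by blast
  then obtain X where X: "\<And>t. t \<ge> X \<Longrightarrow> \<sigma> t > 0 \<and> \<bar>ln (\<sigma> t) - \<rho> t * ln t\<bar> \<le> M"
    unfolding eventually_at_top_linorder by blast
  define K where "K = exp (2 * M + 1)"
  have "eventually (\<lambda>x. \<sigma> x > 0 \<and> (\<forall>l\<in>{1..\<Lambda>}.
      l powr \<rho>0 * \<sigma> x \<le> K * \<sigma> (l * x) \<and> \<sigma> (l * x) \<le> K * (l powr \<rho>0 * \<sigma> x))) at_top"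
    if "\<Lambda> \<ge> 1" for \<Lambda>
    using proximate_order_slowly_varying[OF po that zero_less_one] eventually_ge_at_top[of "max X 0"]
  proof eventually_elim
    case (elim x)
    have \<sigma>x: "\<sigma> x > 0" "\<bar>ln (\<sigma> x) - \<rho> x * ln x\<bar> \<le> M" using X elim by auto
    have "l powr \<rho>0 * \<sigma> x \<le> K * \<sigma> (l * x) \<and> \<sigma> (l * x) \<le> K * (l powr \<rho>0 * \<sigma> x)"
      if l: "l \<in> {1..\<Lambda>}" for l
    proof -
      have "x \<le> l * x" using l elim by (simp add: mult_le_cancel_right1)
      then have \<sigma>lx: "\<sigma> (l * x) > 0" "\<bar>ln (\<sigma> (l * x)) - \<rho> (l * x) * ln (l * x)\<bar> \<le> M"
        using X elim by auto
      have "ln (l powr \<rho>0 * \<sigma> x) = \<rho>0 * ln l + ln (\<sigma> x)"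
        using l \<sigma>x by (simp add: ln_mult ln_powr)
      moreover have "\<bar>\<rho> (l * x) * ln (l * x) - \<rho> x * ln x - \<rho>0 * ln l\<bar> \<le> 1"
        using elim l by blast
      ultimately have "\<bar>ln (\<sigma> (l * x)) - ln (l powr \<rho>0 * \<sigma> x)\<bar> \<le> 2 * M + 1"
        using \<sigma>x(2) \<sigma>lx(2) by linarith
      then show ?thesis
        using \<sigma>x \<sigma>lx l unfolding K_def
        by (auto intro!: le_exp_mult_if_ln_diff_le simp: abs_le_iff)
    qed
    with \<sigma>x show ?case by blast
  qed
  moreover have "K > 0" unfolding K_def by simp
  ultimately show ?thesis unfolding uniform_powr_scaling_def by blast
qed

lemma uniform_powr_scaling_quotient_bounds:
  assumes "uniform_powr_scaling f r"
  obtains K where "K > 0"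
    and "\<And>\<Lambda> a. \<Lambda> \<ge> 1 \<Longrightarrow> eventually (\<lambda>x. \<forall>l\<in>{1..\<Lambda>}.
           l powr (r - a) / K \<le> f (l * x) / (l powr a * f x) \<and>
           f (l * x) / (l powr a * f x) \<le> K * l powr (r - a)) at_top"
proof -
  obtain K where "K > 0" and K: "\<And>\<Lambda>. \<Lambda> \<ge> 1 \<Longrightarrow> eventually (\<lambda>x. f x > 0 \<and>
      (\<forall>l\<in>{1..\<Lambda>}. l powr r * f x \<le> K * f (l * x) \<and> f (l * x) \<le> K * (l powr r * f x))) at_top"
    using assms unfolding uniform_powr_scaling_def by blast
  have "eventually (\<lambda>x. \<forall>l\<in>{1..\<Lambda>}.
           l powr (r - a) / K \<le> f (l * x) / (l powr a * f x) \<and>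
           f (l * x) / (l powr a * f x) \<le> K * l powr (r - a)) at_top" if "\<Lambda> \<ge> 1" for \<Lambda> a
    using K[OF that]
  proof eventually_elim
    case (elim x)
    show ?case
    proof
      fix l :: real assume l: "l \<in> {1..\<Lambda>}"
      then have "l powr a > 0" "l powr (r - a) = l powr r / l powr a" by (auto simp: powr_diff)
      then show "l powr (r - a) / K \<le> f (l * x) / (l powr a * f x) \<and>
          f (l * x) / (l powr a * f x) \<le> K * l powr (r - a)"
        using elim l \<open>K > 0\<close> by (auto simp: field_simps)
    qed
  qed
  with \<open>K > 0\<close> show thesis by (rule that)
qed

lemma index_alpha_eq_if_uniform_powr_scaling:
  assumes "uniform_powr_scaling f r"
  shows "index_alpha f = ereal r"
proof -
  obtain K where "K > 0" and bounds: "\<And>\<Lambda> a. \<Lambda> \<ge> 1 \<Longrightarrow> eventually (\<lambda>x. \<forall>l\<in>{1..\<Lambda>}.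
      l powr (r - a) / K \<le> f (l * x) / (l powr a * f x) \<and>
      f (l * x) / (l powr a * f x) \<le> K * l powr (r - a)) at_top"
    using uniform_powr_scaling_quotient_bounds[OF assms] by blast
  let ?S = "{a. \<exists>C>0. \<forall>\<Lambda>>1.
      Limsup at_top (\<lambda>x. SUP l\<in>{1..\<Lambda>}. ereal (f (l * x) / (l powr a * f x))) \<le> ereal C}"
  have r_mem: "r \<in> ?S"
  proof (intro CollectI exI conjI allI impI)
    fix \<Lambda> :: real assume "\<Lambda> > 1"
    show "Limsup at_top (\<lambda>x. SUP l\<in>{1..\<Lambda>}. ereal (f (l * x) / (l powr r * f x))) \<le> ereal K"
      using bounds[of \<Lambda> r] \<open>\<Lambda> > 1\<close>
      by (intro Limsup_bounded) (auto elim!: eventually_mono intro!: SUP_least)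
  qed (fact \<open>K > 0\<close>)
  have r_le: "ereal r \<le> ereal a" if a: "a \<in> ?S" for a
  proof (rule ccontr)
    assume "\<not> ereal r \<le> ereal a"
    then have "a < r" by simp
    obtain C where C: "\<And>\<Lambda>. \<Lambda> > 1 \<Longrightarrow>
        Limsup at_top (\<lambda>x. SUP l\<in>{1..\<Lambda>}. ereal (f (l * x) / (l powr a * f x))) \<le> ereal C"
      using a by blast
    obtain \<Lambda> where "\<Lambda> > 1" and \<Lambda>: "\<Lambda> powr (r - a) > K * C"
      using ex_gt_one_powr_gt[of "r - a" "K * C"] \<open>a < r\<close> by auto
    have "ereal (\<Lambda> powr (r - a) / K)
        \<le> Limsup at_top (\<lambda>x. SUP l\<in>{1..\<Lambda>}. ereal (f (l * x) / (l powr a * f x)))"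
      using bounds[of \<Lambda> a] \<open>\<Lambda> > 1\<close>
      by (intro le_Limsup) (auto elim!: eventually_mono intro!: SUP_upper2[of \<Lambda>])
    also have "\<dots> \<le> ereal C" using C[OF \<open>\<Lambda> > 1\<close>] .
    finally show False using \<Lambda> \<open>K > 0\<close> by (simp add: field_simps)
  qed
  show ?thesis
    unfolding index_alpha_def by (intro antisym INF_lower[OF r_mem] INF_greatest r_le)
qed

lemma index_beta_eq_if_uniform_powr_scaling:
  assumes "uniform_powr_scaling f r"
  shows "index_beta f = ereal r"
proof -
  obtain K where "K > 0" and bounds: "\<And>\<Lambda> a. \<Lambda> \<ge> 1 \<Longrightarrow> eventually (\<lambda>x. \<forall>l\<in>{1..\<Lambda>}.
      l powr (r - a) / K \<le> f (l * x) / (l powr a * f x) \<and>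
      f (l * x) / (l powr a * f x) \<le> K * l powr (r - a)) at_top"
    using uniform_powr_scaling_quotient_bounds[OF assms] by blast
  let ?S = "{b. \<exists>D>0. \<forall>\<Lambda>>1.
      Liminf at_top (\<lambda>x. INF l\<in>{1..\<Lambda>}. ereal (f (l * x) / (l powr b * f x))) \<ge> ereal D}"
  have r_mem: "r \<in> ?S"
  proof (intro CollectI exI conjI allI impI)
    fix \<Lambda> :: real assume "\<Lambda> > 1"
    show "Liminf at_top (\<lambda>x. INF l\<in>{1..\<Lambda>}. ereal (f (l * x) / (l powr r * f x))) \<ge> ereal (1 / K)"
      using bounds[of \<Lambda> r] \<open>\<Lambda> > 1\<close>
      by (intro Liminf_bounded) (auto elim!: eventually_mono intro!: INF_greatest)
  qed (use \<open>K > 0\<close> in simp)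
  have le_r: "ereal b \<le> ereal r" if b: "b \<in> ?S" for b
  proof (rule ccontr)
    assume "\<not> ereal b \<le> ereal r"
    then have "r < b" by simp
    obtain D where "D > 0" and D: "\<And>\<Lambda>. \<Lambda> > 1 \<Longrightarrow>
        Liminf at_top (\<lambda>x. INF l\<in>{1..\<Lambda>}. ereal (f (l * x) / (l powr b * f x))) \<ge> ereal D"
      using b by blast
    obtain \<Lambda> where "\<Lambda> > 1" and \<Lambda>: "\<Lambda> powr (b - r) > K / D"
      using ex_gt_one_powr_gt[of "b - r" "K / D"] \<open>r < b\<close> by auto
    have "ereal D \<le> Liminf at_top (\<lambda>x. INF l\<in>{1..\<Lambda>}. ereal (f (l * x) / (l powr b * f x)))"
      using D[OF \<open>\<Lambda> > 1\<close>] .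
    also have "\<dots> \<le> ereal (K * \<Lambda> powr (r - b))"
      using bounds[of \<Lambda> b] \<open>\<Lambda> > 1\<close>
      by (intro Liminf_le) (auto elim!: eventually_mono intro!: INF_lower2[of \<Lambda>])
    finally have "D * \<Lambda> powr (b - r) \<le> K"
      using \<open>\<Lambda> > 1\<close> by (simp add: powr_diff field_simps)
    then show False using \<Lambda> \<open>D > 0\<close> by (simp add: field_simps)
  qed
  show ?thesis
    unfolding index_beta_def by (intro antisym SUP_upper[OF r_mem] SUP_least le_r)
qed

lemma omega1_if_uniform_powr_scaling:
  assumes "uniform_powr_scaling f r"
  shows "omega1 f"
proof -
  obtain K where "K > 0" and K: "\<And>\<Lambda>. \<Lambda> \<ge> 1 \<Longrightarrow> eventually (\<lambda>x. f x > 0 \<and>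
      (\<forall>l\<in>{1..\<Lambda>}. l powr r * f x \<le> K * f (l * x) \<and> f (l * x) \<le> K * (l powr r * f x))) at_top"
    using assms unfolding uniform_powr_scaling_def by blast
  have "eventually (\<lambda>x. norm (f (2 * x)) \<le> K * 2 powr r * norm (f x)) at_top"
    using K[of 2, OF one_le_numeral]
  proof (elim eventually_mono conjE)
    fix x assume "f x > 0" and "\<forall>l\<in>{1..2}. l powr r * f x \<le> K * f (l * x) \<and> f (l * x) \<le> K * (l powr r * f x)"
    then have lower: "2 powr r * f x \<le> K * f (2 * x)" and upper: "f (2 * x) \<le> K * (2 powr r * f x)"
      by auto
    have "0 < K * f (2 * x)" using lower \<open>f x > 0\<close> by (smt (verit) powr_gt_zero mult_pos_pos)
    then have "f (2 * x) > 0" using \<open>K > 0\<close> by (simp add: zero_less_mult_iff)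
    then show "norm (f (2 * x)) \<le> K * 2 powr r * norm (f x)"
      using upper \<open>f x > 0\<close> by (simp add: mult.assoc)
  qed
  then show ?thesis unfolding omega1_def by (rule bigoI)
qed

lemma omega6_if_uniform_powr_scaling:
  assumes nonneg: "\<forall>t\<ge>0. f t \<ge> 0" and mono: "mono_on {0..} f"
    and "uniform_powr_scaling f r" and "r > 0"
  shows "omega6 f"
proof -
  obtain K where "K > 0" and K: "\<And>\<Lambda>. \<Lambda> \<ge> 1 \<Longrightarrow> eventually (\<lambda>x. f x > 0 \<and>
      (\<forall>l\<in>{1..\<Lambda>}. l powr r * f x \<le> K * f (l * x) \<and> f (l * x) \<le> K * (l powr r * f x))) at_top"
    using assms(3) unfolding uniform_powr_scaling_def by blast
  obtain H where "H > 1" and H: "H powr r > 2 * K"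
    using ex_gt_one_powr_gt[OF \<open>r > 0\<close>] by blast
  have "eventually (\<lambda>x. f x > 0 \<and> H powr r * f x \<le> K * f (H * x)) at_top"
    using K[of H] \<open>H > 1\<close> by (auto elim!: eventually_mono)
  then obtain X where X: "\<And>x. x \<ge> X \<Longrightarrow> f x > 0 \<and> H powr r * f x \<le> K * f (H * x)"
    unfolding eventually_at_top_linorder by blast
  define X' where "X' = max X 0"
  define H' where "H' = max H (max 1 (2 * f X'))"
  have "2 * f t \<le> f (H' * t) + H'" if "t \<ge> 0" for t
  proof (cases "t \<ge> X'")
    case True
    then have "f t > 0" "H powr r * f t \<le> K * f (H * t)" using X unfolding X'_def by auto
    have "K * (2 * f t) = (2 * K) * f t" by simp
    also have "\<dots> \<le> H powr r * f t"
      using H \<open>f t > 0\<close> by (intro mult_right_mono) auto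
    also have "\<dots> \<le> K * f (H * t)" by fact
    finally have "2 * f t \<le> f (H * t)" using \<open>K > 0\<close> by simp
    also have "\<dots> \<le> f (H' * t)"
      using \<open>t \<ge> 0\<close> \<open>H > 1\<close> by (intro mono_onD[OF mono]) (auto simp: H'_def mult_right_mono)
    finally show ?thesis unfolding H'_def by linarith
  next
    case False
    then have "f t \<le> f X'" using \<open>t \<ge> 0\<close> by (intro mono_onD[OF mono]) (auto simp: X'_def)
    moreover have "f (H' * t) \<ge> 0" using nonneg \<open>t \<ge> 0\<close> \<open>H > 1\<close> by (simp add: H'_def)
    ultimately show ?thesis unfolding H'_def by linarith
  qed
  moreover have "H' \<ge> 1" unfolding H'_def by simp
  ultimately show ?thesis unfolding omega6_def by blast
qed

theorem corollary4p16:
  fixes \<sigma> \<rho> :: "real \<Rightarrow> real" and \<rho>0 :: real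
  assumes nonneg: "\<forall>t\<ge>0. \<sigma> t \<ge> 0"
    and mono: "mono_on {0..} \<sigma>"
    and lim: "filterlim \<sigma> at_top at_top"
    and po: "proximate_order \<rho> \<rho>0"
    and adm: "admits_proximate_order \<sigma> \<rho>"
  shows "index_beta \<sigma> = ereal \<rho>0 \<and> index_mu \<sigma> = ereal \<rho>0 \<and>
         index_rho \<sigma> = ereal \<rho>0 \<and> index_alpha \<sigma> = ereal \<rho>0 \<and>
         ((\<exists>\<rho>' \<rho>0'. proximate_order \<rho>' \<rho>0' \<and> \<rho>0' > 0 \<and> admits_proximate_order \<sigma> \<rho>')
            \<longrightarrow> omega1 \<sigma> \<and> omega6 \<sigma>)"
proof -
  have scaling: "uniform_powr_scaling \<sigma> \<rho>0"
    using po adm by (rule uniform_powr_scaling_if_admits_proximate_order)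
  have "index_mu \<sigma> = ereal \<rho>0" "index_rho \<sigma> = ereal \<rho>0"
    using ln_div_ln_tendsto_if_admits_proximate_order[OF po adm]
    by (rule index_mu_index_rho_eq_if_tendsto)+
  moreover have "omega1 \<sigma> \<and> omega6 \<sigma>"
    if "proximate_order \<rho>' \<rho>0'" "\<rho>0' > 0" "admits_proximate_order \<sigma> \<rho>'" for \<rho>' \<rho>0'
  proof -
    have "uniform_powr_scaling \<sigma> \<rho>0'"
      using that(1,3) by (rule uniform_powr_scaling_if_admits_proximate_order)
    then show ?thesis
      using omega1_if_uniform_powr_scaling omega6_if_uniform_powr_scaling[OF nonneg mono _ that(2)]
      by blast
  qed
  ultimately show ?thesis
    using index_alpha_eq_if_uniform_powr_scaling[OF scaling]
      index_beta_eq_if_uniform_powr_scaling[OF scaling]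
    by blast
qed

end
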